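(* Let $M$ be a constant real $2n\times2n$ symmetric positive definite matrix such that $$\frac{Q+2}{4}\,\langle M\nabla_{\mathbb H}\phi_M,\nabla_{\mathbb H}\phi_M\rangle(x,t)=\phi_M(x,t)\,\mathcal L_M\phi_M(x,t)\quad\text{for all }(x,t)\in\mathbb R^{2n+1}.$$ Then $M$ is symplectic, i.e. $M^{-1}=J^tMJ$.
   Context: Points of $\mathbb R^{2n+1}$ are written $(x,t)$ with $x\in\mathbb R^{2n}$, $t\in\mathbb R$. Let $J=\begin{pmatrix}0&-\mathbb I_n\\ \mathbb I_n&0\end{pmatrix}$ and $Q=2n+2$. The horizontal vector fields are $X_i=\partial_{x_i}+2(Jx)_i\partial_t$, $i=1,\dots,2n$; $\nabla_{\mathbb H}\psi=(X_1\psi,\dots,X_{2n}\psi)$, $D^2_{\mathbb H}\psi=\big(\tfrac12(X_iX_j+X_jX_i)\psi\big)_{i,j}$, and $\mathcal L_M\psi=\mathrm{tr}(MD^2_{\mathbb H}\psi)$. For symmetric positive definite $M$, $\phi_M(x,t)=\langle M^{-1}x,x\rangle^2+t^2$. *)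

theory Defs
  imports "HOL-Analysis.Analysis"
begin

text \<open>Points of R^(2n+1) are pairs (x,t) with x :: real^('n+'n) (the index set of R^(2n)
  is split as two copies of 'n, the first copy giving coordinates 1..n, the second n+1..2n),
  t :: real.\<close>

definition Jmat :: "real^('n::finite + 'n)^('n + 'n)" where
  "Jmat = (\<chi> i j. case (i, j) of
      (Inl a, Inr b) \<Rightarrow> (if a = b then -1 else 0)
    | (Inr a, Inl b) \<Rightarrow> (if a = b then 1 else 0)
    | _ \<Rightarrow> 0)"

definition Qdim :: "'n::finite itself \<Rightarrow> real" where
  "Qdim _ = 2 * real CARD('n) + 2"

definition pdx :: "('n::finite + 'n) \<Rightarrow> (real^('n + 'n) \<Rightarrow> real \<Rightarrow> real) \<Rightarrow> real^('n + 'n) \<Rightarrow> real \<Rightarrow> real" where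
  "pdx i psi x t = deriv (\<lambda>s. psi (x + s *\<^sub>R axis i 1) t) 0"

definition pdt :: "(real^('n::finite + 'n) \<Rightarrow> real \<Rightarrow> real) \<Rightarrow> real^('n + 'n) \<Rightarrow> real \<Rightarrow> real" where
  "pdt psi x t = deriv (\<lambda>s. psi x (t + s)) 0"

definition Xf :: "('n::finite + 'n) \<Rightarrow> (real^('n + 'n) \<Rightarrow> real \<Rightarrow> real) \<Rightarrow> real^('n + 'n) \<Rightarrow> real \<Rightarrow> real" where
  "Xf i psi = (\<lambda>x t. pdx i psi x t + 2 * (Jmat *v x) $ i * pdt psi x t)"

definition hessH :: "('n::finite + 'n) \<Rightarrow> ('n + 'n) \<Rightarrow> (real^('n + 'n) \<Rightarrow> real \<Rightarrow> real) \<Rightarrow> real^('n + 'n) \<Rightarrow> real \<Rightarrow> real" where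
  "hessH i j psi = (\<lambda>x t. (Xf i (Xf j psi) x t + Xf j (Xf i psi) x t) / 2)"

definition LM :: "real^('n::finite + 'n)^('n + 'n) \<Rightarrow> (real^('n + 'n) \<Rightarrow> real \<Rightarrow> real) \<Rightarrow> real^('n + 'n) \<Rightarrow> real \<Rightarrow> real" where
  "LM M psi = (\<lambda>x t. \<Sum>i\<in>UNIV. \<Sum>j\<in>UNIV. M $ i $ j * hessH j i psi x t)"

definition gradM :: "real^('n::finite + 'n)^('n + 'n) \<Rightarrow> (real^('n + 'n) \<Rightarrow> real \<Rightarrow> real) \<Rightarrow> real^('n + 'n) \<Rightarrow> real \<Rightarrow> real" where
  "gradM M psi = (\<lambda>x t. \<Sum>i\<in>UNIV. \<Sum>j\<in>UNIV. M $ i $ j * Xf j psi x t * Xf i psi x t)"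

definition phiM :: "real^('n::finite + 'n)^('n + 'n) \<Rightarrow> real^('n + 'n) \<Rightarrow> real \<Rightarrow> real" where
  "phiM M = (\<lambda>x t. ((matrix_inv M *v x) \<bullet> x)^2 + t^2)"

end

theory Submission imports Defs begin

text \<open>Write \<open>A = M\<^sup>-\<^sup>1\<close> and \<open>q = \<langle>Ax,x\<rangle>\<close>, so that \<open>\<phi>\<^sub>M = q\<^sup>2 + t\<^sup>2\<close>.
  For symmetric \<open>A\<close> one computes \<open>\<nabla>\<^sub>H\<phi>\<^sub>M = 4(q Ax + t Jx)\<close>, and, \<open>J\<close> being
  skew, \<open>D\<^sup>2\<^sub>H\<phi>\<^sub>M\<close> does not depend on \<open>t\<close>. At a fixed \<open>x\<close> the hypothesis thus equates
  a quadratic polynomial in \<open>t\<close> with \<open>(q\<^sup>2 + t\<^sup>2)\<close> times a constant; comparing the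
  coefficients of \<open>t\<^sup>0\<close> and \<open>t\<^sup>2\<close> gives \<open>q\<^sup>3 = q\<^sup>2 \<langle>MJx,Jx\<rangle>\<close>. Hence the
  symmetric matrices \<open>M\<^sup>-\<^sup>1\<close> and \<open>J\<^sup>tMJ\<close> have the same quadratic form.\<close>

lemma matrix_vector_mult_axis_component:
  fixes A :: "real^'n^'m"
  shows "(A *v axis j 1) $ i = A $ i $ j"
  by (simp add: matrix_vector_mult_basis column_def)

lemma symmetric_matrix_entry:
  assumes "transpose A = A"
  shows "A $ j $ i = A $ i $ j"
proof -
  have "transpose A $ i $ j = A $ i $ j"
    using assms by simp
  then show ?thesis
    by (simp add: transpose_def)
qed

lemma symmetric_inner_axis:
  fixes A :: "real^'m^'m"
  assumes "transpose A = A"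
  shows "(A *v axis i 1) \<bullet> x = (A *v x) $ i"
proof -
  have "A *v axis i 1 = A $ i"
    by (simp add: vec_eq_iff matrix_vector_mult_axis_component symmetric_matrix_entry[OF assms])
  then show ?thesis
    by (simp add: matrix_mult_dot)
qed

lemma quadratic_form_add_scaled:
  fixes A :: "real^'m^'m"
  shows "(A *v (x + s *\<^sub>R e)) \<bullet> (x + s *\<^sub>R e) =
    (A *v x) \<bullet> x + s * ((A *v e) \<bullet> x + (A *v x) \<bullet> e) + s^2 * ((A *v e) \<bullet> e)"
  by (simp add: matrix_vector_right_distrib matrix_vector_mult_scaleR inner_add_left inner_add_right
      algebra_simps power2_eq_square)

lemma matrix_vector_mult_add_scaled:
  "(A *v (x + s *\<^sub>R e)) $ i = (A *v x) $ i + s * (A *v e) $ i"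
  by (simp add: matrix_vector_right_distrib matrix_vector_mult_scaleR)

lemma quadratic_form_congruence:
  fixes M P :: "real^'m^'m"
  shows "((transpose P ** M ** P) *v x) \<bullet> x = (M *v (P *v x)) \<bullet> (P *v x)"
  by (metis dot_lmul_matrix vector_transpose_matrix matrix_vector_mul_assoc inner_commute)

lemma symmetric_matrix_eq_by_quadratic_form:
  fixes B C :: "real^'m^'m"
  assumes "transpose B = B" "transpose C = C" "\<And>x. (B *v x) \<bullet> x = (C *v x) \<bullet> x"
  shows "B = C"
proof -
  define D where "D = B - C"
  have "transpose D = D"
    using assms(1,2) by (simp add: D_def transpose_def vec_eq_iff)
  then have sym: "D $ i $ j = D $ j $ i" for i j
    by (rule symmetric_matrix_entry)
  have q: "(D *v x) \<bullet> x = 0" for x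
    using assms(3)[of x] by (simp add: D_def matrix_vector_mult_diff_rdistrib inner_diff_left)
  have e: "(D *v axis j 1) \<bullet> axis i 1 = D $ i $ j" for i j
    by (simp add: inner_axis matrix_vector_mult_axis_component)
  have "D $ i $ j = 0" for i j
  proof -
    have "(D *v (axis i 1 + axis j 1)) \<bullet> (axis i 1 + axis j 1) = 0" by (rule q)
    then have "D$i$i + D$i$j + D$j$i + D$j$j = 0"
      by (simp add: matrix_vector_right_distrib inner_add_left inner_add_right e)
    moreover have "D$i$i = 0" "D$j$j = 0"
      using q[of "axis i 1"] q[of "axis j 1"] e by auto
    ultimately show ?thesis using sym[of i j] by simp
  qed
  then show ?thesis by (simp add: D_def vec_eq_iff)
qed

lemma invertible_if_pos_definite:
  fixes M :: "real^'n^'n"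
  assumes "\<forall>v. v \<noteq> 0 \<longrightarrow> v \<bullet> (M *v v) > 0"
  shows "invertible M"
proof -
  have "\<forall>x. M *v x = 0 \<longrightarrow> x = 0"
    using assms by (metis inner_zero_right less_irrefl)
  then show ?thesis
    using invertible_left_inverse matrix_left_invertible_ker by blast
qed

lemma matrix_inv_right: "invertible M \<Longrightarrow> M ** matrix_inv M = mat 1"
  unfolding invertible_def matrix_inv_def by (metis (mono_tags, lifting) someI_ex)

lemma symmetric_matrix_inv:
  fixes M :: "real^'n^'n"
  assumes "transpose M = M" "invertible M"
  shows "transpose (matrix_inv M) = matrix_inv M"
proof -
  have "transpose (matrix_inv M) ** M = mat 1"
    using matrix_inv_right[OF assms(2)] assms(1) by (metis matrix_transpose_mul transpose_mat)
  have "transpose (matrix_inv M) = transpose (matrix_inv M) ** (M ** matrix_inv M)"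
    using matrix_inv_right[OF assms(2)] by (simp add: matrix_mul_rid)
  also have "\<dots> = matrix_inv M"
    using \<open>transpose (matrix_inv M) ** M = mat 1\<close> by (simp add: matrix_mul_assoc matrix_mul_lid)
  finally show ?thesis .
qed

lemma quadratic_identity_extreme_coeffs:
  fixes a b c k q L :: real
  assumes "k \<noteq> 0" and "\<forall>t. k * (a + t * b + t^2 * c) = (q^2 + t^2) * L"
  shows "a = q^2 * c"
proof -
  have "k * a = q^2 * L" using assms(2)[rule_format, of 0] by simp
  moreover have "k * (a + b + c) = (q^2 + 1) * L" "k * (a - b + c) = (q^2 + 1) * L"
    using assms(2)[rule_format, of 1] assms(2)[rule_format, of "-1"] by simp_all
  ultimately have "k * a = k * (q^2 * c)" by (simp add: algebra_simps)
  with assms(1) show ?thesis by simp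
qed

definition gauge :: "real^'m^'m \<Rightarrow> real^'m \<Rightarrow> real \<Rightarrow> real" where
  "gauge A x t = ((A *v x) \<bullet> x)^2 + t^2"

definition gradH :: "(real^('n::finite + 'n) \<Rightarrow> real \<Rightarrow> real) \<Rightarrow> real^('n + 'n) \<Rightarrow> real \<Rightarrow> real^('n + 'n)" where
  "gradH psi x t = (\<chi> i. Xf i psi x t)"

lemma Jmat_skew: "Jmat $ i $ j = - Jmat $ j $ i"
  by (cases i; cases j) (auto simp: Jmat_def)

lemma pdx_eqI: "((\<lambda>s. psi (x + s *\<^sub>R axis i 1) t) has_real_derivative D) (at 0) \<Longrightarrow> pdx i psi x t = D"
  unfolding pdx_def by (rule DERIV_imp_deriv)

lemma pdt_eqI: "((\<lambda>s. psi x (t + s)) has_real_derivative D) (at 0) \<Longrightarrow> pdt psi x t = D"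
  unfolding pdt_def by (rule DERIV_imp_deriv)

lemma Xf_gauge:
  fixes A :: "real^('n::finite + 'n)^('n + 'n)"
  assumes "transpose A = A"
  shows "Xf i (gauge A) x t = 4 * ((A *v x) \<bullet> x) * (A *v x) $ i + 4 * t * (Jmat *v x) $ i"
proof -
  let ?q = "(A *v x) \<bullet> x" and ?e = "axis i 1 :: real^('n + 'n)"
  have shift: "gauge A (x + s *\<^sub>R ?e) t
      = (?q + s * (2 * (A *v x) $ i) + s^2 * ((A *v ?e) \<bullet> ?e))^2 + t^2" for s
    by (simp add: gauge_def quadratic_form_add_scaled symmetric_inner_axis[OF assms] inner_axis)
  have "pdx i (gauge A) x t = 2 * ?q * (2 * (A *v x) $ i)"
    by (rule pdx_eqI, unfold shift) (auto intro!: derivative_eq_intros)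
  moreover have "pdt (gauge A) x t = 2 * t"
    by (rule pdt_eqI) (auto simp: gauge_def intro!: derivative_eq_intros)
  ultimately show ?thesis by (simp add: Xf_def)
qed

lemma Xf_Xf_gauge:
  fixes A :: "real^('n::finite + 'n)^('n + 'n)"
  assumes "transpose A = A"
  shows "Xf j (Xf i (gauge A)) x t = 8 * (A *v x) $ j * (A *v x) $ i + 4 * ((A *v x) \<bullet> x) * A $ i $ j
    + 4 * t * Jmat $ i $ j + 8 * (Jmat *v x) $ j * (Jmat *v x) $ i"
proof -
  let ?q = "(A *v x) \<bullet> x" and ?e = "axis j 1 :: real^('n + 'n)"
  have Xi: "Xf i (gauge A) = (\<lambda>x t. 4 * ((A *v x) \<bullet> x) * (A *v x) $ i + 4 * t * (Jmat *v x) $ i)"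
    by (intro ext) (rule Xf_gauge[OF assms])
  have shift: "Xf i (gauge A) (x + s *\<^sub>R ?e) t
      = 4 * (?q + s * (2 * (A *v x) $ j) + s^2 * ((A *v ?e) \<bullet> ?e)) * ((A *v x) $ i + s * A $ i $ j)
        + 4 * t * ((Jmat *v x) $ i + s * Jmat $ i $ j)" for s
    by (simp add: Xi quadratic_form_add_scaled symmetric_inner_axis[OF assms] inner_axis
        matrix_vector_mult_add_scaled matrix_vector_mult_axis_component)
  have "pdx j (Xf i (gauge A)) x t = 4 * (2 * (A *v x) $ j * (A *v x) $ i + ?q * A $ i $ j) + 4 * t * Jmat $ i $ j"
    by (rule pdx_eqI, unfold shift) (auto intro!: derivative_eq_intros simp: algebra_simps)
  moreover have "pdt (Xf i (gauge A)) x t = 4 * (Jmat *v x) $ i"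
    by (rule pdt_eqI) (auto simp: Xi intro!: derivative_eq_intros)
  ultimately show ?thesis by (simp add: Xf_def algebra_simps)
qed

lemma hessH_gauge:
  fixes A :: "real^('n::finite + 'n)^('n + 'n)"
  assumes "transpose A = A"
  shows "hessH i j (gauge A) x t = 8 * (A *v x) $ i * (A *v x) $ j + 4 * ((A *v x) \<bullet> x) * A $ i $ j
    + 8 * (Jmat *v x) $ i * (Jmat *v x) $ j"
proof -
  \<comment> \<open>the \<open>t\<close>-terms of \<open>X\<^sub>iX\<^sub>j\<close> and \<open>X\<^sub>jX\<^sub>i\<close> cancel\<close>
  have J: "Jmat $ j $ i = - Jmat $ i $ j"
    by (rule Jmat_skew)
  show ?thesis
    by (simp add: hessH_def Xf_Xf_gauge[OF assms] symmetric_matrix_entry[OF assms, of j i] J algebra_simps)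
qed

lemma LM_gauge_const:
  fixes A :: "real^('n::finite + 'n)^('n + 'n)"
  assumes "transpose A = A"
  shows "LM M (gauge A) x t = LM M (gauge A) x 0"
  by (simp add: LM_def hessH_gauge[OF assms])

lemma gradM_eq_quadratic_form: "gradM M psi x t = (M *v gradH psi x t) \<bullet> gradH psi x t"
  by (simp add: gradM_def gradH_def inner_vec_def matrix_vector_mult_def sum_distrib_left algebra_simps)

lemma gradH_gauge:
  fixes A :: "real^('n::finite + 'n)^('n + 'n)"
  assumes "transpose A = A"
  shows "gradH (gauge A) x t = 4 *\<^sub>R (((A *v x) \<bullet> x) *\<^sub>R (A *v x) + t *\<^sub>R (Jmat *v x))"
  by (simp add: gradH_def vec_eq_iff Xf_gauge[OF assms] algebra_simps)

lemma gauge_identity_forces_symplectic_form: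
  fixes M A :: "real^('n::finite + 'n)^('n + 'n)"
  assumes symA: "transpose A = A" and MA: "M *v (A *v x) = x"
    and "k \<noteq> 0" and q_nz: "(A *v x) \<bullet> x \<noteq> 0"
    and eq: "\<forall>t. k * gradM M (gauge A) x t = gauge A x t * LM M (gauge A) x t"
  shows "(A *v x) \<bullet> x = (M *v (Jmat *v x)) \<bullet> (Jmat *v x)"
proof -
  define q where "q = (A *v x) \<bullet> x"
  define v where "v = q *\<^sub>R (A *v x)"
  define w where "w = Jmat *v x"
  have grad: "gradM M (gauge A) x t
      = 16 * ((M *v v) \<bullet> v + t * ((M *v w) \<bullet> v + (M *v v) \<bullet> w) + t^2 * ((M *v w) \<bullet> w))" for t
    using quadratic_form_add_scaled[of M v t w]
    by (simp add: gradM_eq_quadratic_form gradH_gauge[OF symA] matrix_vector_mult_scaleR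
        q_def v_def w_def)
  have gauge_x: "gauge A x t = q^2 + t^2" for t
    by (simp add: gauge_def q_def)
  have "(k * 16) * ((M *v v) \<bullet> v + t * ((M *v w) \<bullet> v + (M *v v) \<bullet> w) + t^2 * ((M *v w) \<bullet> w))
      = (q^2 + t^2) * LM M (gauge A) x 0" for t
    using eq[rule_format, of t]
    unfolding grad gauge_x LM_gauge_const[OF symA, of M x t] mult.assoc .
  then have "(M *v v) \<bullet> v = q^2 * ((M *v w) \<bullet> w)"
    by (rule quadratic_identity_extreme_coeffs[rotated, OF allI]) (use \<open>k \<noteq> 0\<close> in simp)
  moreover have "(M *v v) \<bullet> v = q^2 * q"
    by (simp add: v_def matrix_vector_mult_scaleR MA q_def inner_commute power2_eq_square)
  ultimately show ?thesis
    using q_nz by (simp add: q_def w_def)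
qed

theorem lemma3p2:
  fixes M :: "real^('n::finite + 'n)^('n + 'n)"
  assumes symm: "transpose M = M"
    and posdef: "\<forall>v. v \<noteq> 0 \<longrightarrow> v \<bullet> (M *v v) > 0"
    and eq: "\<forall>x t. (Qdim TYPE('n) + 2) / 4 * gradM M (phiM M) x t
                    = phiM M x t * LM M (phiM M) x t"
  shows "matrix_inv M = transpose Jmat ** M ** Jmat"
proof -
  define A where "A = matrix_inv M"
  have invertible: "invertible M"
    using posdef by (rule invertible_if_pos_definite)
  have symA: "transpose A = A"
    unfolding A_def using symm invertible by (rule symmetric_matrix_inv)
  have "A = transpose Jmat ** M ** Jmat"
  proof (rule symmetric_matrix_eq_by_quadratic_form[OF symA])
    show "transpose (transpose Jmat ** M ** Jmat) = transpose Jmat ** M ** Jmat"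
      using symm by (simp add: matrix_transpose_mul matrix_mul_assoc)
  next
    fix x
    have MA: "M *v (A *v x) = x"
      using matrix_inv_right[OF invertible] by (simp add: A_def matrix_vector_mul_assoc)
    show "(A *v x) \<bullet> x = ((transpose Jmat ** M ** Jmat) *v x) \<bullet> x"
    proof (cases "x = 0")
      case False
      then have "A *v x \<noteq> 0"
        using MA by auto
      then have "(A *v x) \<bullet> x > 0"
        using posdef MA by (metis inner_commute)
      moreover have "phiM M = gauge A"
        by (intro ext) (simp add: phiM_def gauge_def A_def)
      ultimately show ?thesis
        using eq gauge_identity_forces_symplectic_form[OF symA MA, of "(Qdim TYPE('n) + 2) / 4"]
        by (simp add: Qdim_def quadratic_form_congruence)
    qed simp
  qed
  then show ?thesis
    unfolding A_def .
qed

end
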